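(* Let $n,k$ be integers with $2\le 2k\le n-4$ and let $\lambda\in\overline{\mathcal{U}}_{T_{n,n-2k}}$. Then the Young diagram $\mathrm{KN}(S_\lambda)$ has exactly $2n-3+2k$ cells; consequently the sum of the hook lengths of the cells on its main diagonal is $2n-3+2k$.
   Context: A partition of $N$ into distinct parts is a sequence $\lambda=(\lambda_1<\dots<\lambda_t)$ of positive integers with sum $N$ and $t\ge 2$, identified with its set of parts. Missing parts: $\mathcal{M}_\lambda=\{1,\dots,\lambda_t\}\setminus\lambda$. $\lambda$ is refinable if two distinct missing parts sum to a part of $\lambda$, unrefinable otherwise; $\mathcal{U}_N$ is the set of unrefinable partitions of $N$. An element of $\mathcal{U}_N$ is maximal if its largest part is the maximum of the largest parts of elements of $\mathcal{U}_N$; $\widetilde{\mathcal{U}}_N$ is the set of these and $\overline{\mathcal{U}}_N=\{\lambda\in\widetilde{\mathcal{U}}_N:\#\mathcal{M}_\lambda=\lfloor\lambda_t/2\rfloor\}$. $T_n=n(n+1)/2$, $T_{n,d}=T_n-d$. $S_\lambda=\mathbb{N}_0\setminus\lambda$. The Keith–Nath transformation sends a set $S\subseteq\mathbb{N}_0$ with $0\in S$ and finite complement to the Young diagram $\mathrm{KN}(S)$ whose boundary is the lattice path that, starting at the origin, takes for $j=0,1,\dots,\max(\mathbb{N}_0\setminus S)$ an east step if $j\in S$ and a north step otherwise. Hook length of a cell = (cells to its right in its row) + (cells below it in its column) + 1; the main diagonal consists of the cells in row $i$, column $i$. *)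

theory Defs
  imports Main
begin

text \<open>Partitions into distinct parts are represented by their (finite) set of parts.\<close>

definition distinct_partition :: "nat \<Rightarrow> nat set \<Rightarrow> bool" where
  "distinct_partition N lam \<longleftrightarrow>
     finite lam \<and> 0 \<notin> lam \<and> card lam \<ge> 2 \<and> \<Sum>lam = N"

definition missing :: "nat set \<Rightarrow> nat set" where
  "missing lam = {1..Max lam} - lam"

definition refinable :: "nat set \<Rightarrow> bool" where
  "refinable lam \<longleftrightarrow>
     (\<exists>a\<in>missing lam. \<exists>b\<in>missing lam. a \<noteq> b \<and> a + b \<in> lam)"

definition unrefinable_parts :: "nat \<Rightarrow> nat set set" where
  "unrefinable_parts N = {lam. distinct_partition N lam \<and> \<not> refinable lam}"

definition maximal_unrefinable :: "nat \<Rightarrow> nat set set" where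
  "maximal_unrefinable N =
     {lam \<in> unrefinable_parts N. \<forall>mu \<in> unrefinable_parts N. Max mu \<le> Max lam}"

definition bar_unrefinable :: "nat \<Rightarrow> nat set set" where
  "bar_unrefinable N =
     {lam \<in> maximal_unrefinable N. card (missing lam) = Max lam div 2}"

definition tri :: "nat \<Rightarrow> nat" where
  "tri n = n * (n + 1) div 2"

definition tri_d :: "nat \<Rightarrow> nat \<Rightarrow> nat" where
  "tri_d n d = tri n - d"

definition S_of :: "nat set \<Rightarrow> nat set" where
  "S_of lam = UNIV - lam"

text \<open>Let c_0 < c_1 < ... < c_(r-1) be the elements of
  the (finite) complement of S.  The lattice path from the origin takes, for
  j = 0,...,max(complement), an east step if j is in S and a north step otherwise.
  Its north step from height y to height y+1 is the step j = c_y, preceded by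
  card {s in S. s < c_y} east steps.  The Young diagram is the region enclosed by
  the path, the y-axis and the line at height r; so the row at height y (between
  heights y and y+1) consists of the cells in columns 0,...,card {s in S. s < c_y} - 1.
  We record cells in English matrix coordinates (i, j), 0-based: row i counted
  from the top (i.e. height y = r - 1 - i), column j counted from the left.\<close>
definition KN :: "nat set \<Rightarrow> (nat \<times> nat) set" where
  "KN S = (let cs = sorted_list_of_set (UNIV - S); r = length cs in
      {(i, j). i < r \<and> j < card {s \<in> S. s < cs ! (r - 1 - i)}})"

definition hook_length :: "(nat \<times> nat) set \<Rightarrow> nat \<times> nat \<Rightarrow> nat" where
  "hook_length D c =
     card {j'. j' > snd c \<and> (fst c, j') \<in> D} + card {i'. i' > fst c \<and> (i', snd c) \<in> D} + 1"

definition diagonal_hook_sum :: "(nat \<times> nat) set \<Rightarrow> nat" where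
  "diagonal_hook_sum D = (\<Sum>c \<in> {c \<in> D. fst c = snd c}. hook_length D c)"

end

theory Submission
  imports Defs
begin

(* A maximal unrefinable partition of N = T_n - (n - 2k) has largest part m >= 2n - 5, because
   explicit unrefinable partitions of N with largest part 2n - 5 exist.  For lam in bar-U_N exactly
   half of 1..m is missing, so lam has m - m div 2 >= n - 2 parts, while n - 1 parts would force
   the sum of lam above N; hence lam has exactly n - 2 parts.  The row of KN(S_lam) belonging to the
   i-th smallest part c_i (counting from 0) has c_i - i cells, so the diagram has N - T_(n-3)
   = 2n - 3 + 2k cells.  Finally, in every Young diagram the hooks of the diagonal cells partition
   the diagram, so the diagonal hook lengths add up to the number of cells. *)

lemma card_less_sorted_list_of_set_nth:
  assumes "finite A" and "i < card A"
  shows "card {a \<in> A. a < sorted_list_of_set A ! i} = i"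
proof -
  define cs where "cs = sorted_list_of_set A"
  have len: "i < length cs" and set_cs: "set cs = A" and "distinct cs"
    and strict: "sorted_wrt (<) cs" and "sorted cs"
    using assms by (simp_all add: cs_def)
  have "{a \<in> A. a < cs ! i} = set (take i cs)"
  proof (intro set_eqI iffI)
    fix a assume "a \<in> {a \<in> A. a < cs ! i}"
    then obtain j where "j < length cs" "a = cs ! j" "cs ! j < cs ! i"
      by (auto simp: set_cs [symmetric] in_set_conv_nth)
    moreover from this have "j < i"
      using \<open>sorted cs\<close> by (meson not_less sorted_nth_mono)
    ultimately show "a \<in> set (take i cs)"
      by (auto simp: in_set_conv_nth)
  next
    fix a assume "a \<in> set (take i cs)"
    then obtain j where "j < i" "a = cs ! j"
      using len by (auto simp: in_set_conv_nth)
    then show "a \<in> {a \<in> A. a < cs ! i}"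
      using strict len set_cs by (auto simp: sorted_wrt_nth_less)
  qed
  then show ?thesis
    using len \<open>distinct cs\<close> by (simp add: cs_def distinct_card)
qed

lemma sum_eq_sum_sorted_list_of_set_nth:
  assumes "finite A"
  shows "\<Sum>A = (\<Sum>i<card A. sorted_list_of_set A ! i)"
proof -
  have "\<Sum>A = sum_list (sorted_list_of_set A)"
    using assms sum_list_distinct_conv_sum_set[of "sorted_list_of_set A" "\<lambda>x. x"] by simp
  also have "\<dots> = (\<Sum>i<card A. sorted_list_of_set A ! i)"
    using assms by (simp add: sum_list_sum_nth atLeast0LessThan)
  finally show ?thesis .
qed

lemma Suc_le_sorted_list_of_set_nth:
  assumes "finite A" and "0 \<notin> A" and "i < card A"
  shows "Suc i \<le> sorted_list_of_set A ! i"
proof -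
  let ?c = "sorted_list_of_set A ! i"
  have "{a \<in> A. a < ?c} \<subseteq> {1..<?c}"
    using assms(2) by (auto simp: Suc_le_eq intro: gr0I)
  from card_mono[OF finite_atLeastLessThan this] have "i \<le> ?c - 1"
    using card_less_sorted_list_of_set_nth[OF assms(1,3)]
    by simp
  moreover have "?c \<in> A"
    using assms by (metis length_sorted_list_of_set nth_mem set_sorted_list_of_set)
  ultimately show ?thesis
    using assms(2) by (cases ?c) auto
qed

lemma card_times_Suc_card_le_double_sum:
  fixes A :: "nat set"
  assumes "finite A" and "0 \<notin> A"
  shows "card A * Suc (card A) \<le> 2 * \<Sum>A"
proof -
  have gauss: "t * Suc t = 2 * (\<Sum>i<t. Suc i)" for t :: nat
    by (induction t) auto
  have "(\<Sum>i<card A. Suc i) \<le> \<Sum>A"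
    unfolding sum_eq_sum_sorted_list_of_set_nth[OF assms(1)]
    by (rule sum_mono) (simp add: Suc_le_sorted_list_of_set_nth[OF assms])
  then show ?thesis
    unfolding gauss by simp
qed

definition young_diagram :: "(nat \<times> nat) set \<Rightarrow> bool" where
  "young_diagram D \<longleftrightarrow>
     finite D \<and> (\<forall>i j i' j'. (i, j) \<in> D \<longrightarrow> i' \<le> i \<longrightarrow> j' \<le> j \<longrightarrow> (i', j') \<in> D)"

definition hook :: "(nat \<times> nat) set \<Rightarrow> nat \<times> nat \<Rightarrow> (nat \<times> nat) set" where
  "hook D c = {c' \<in> D. fst c' = fst c \<and> snd c \<le> snd c' \<or> snd c' = snd c \<and> fst c \<le> fst c'}"

lemma card_hook:
  assumes "finite D" and "(i, j) \<in> D"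
  shows "card (hook D (i, j)) = hook_length D (i, j)"
proof -
  define arm where "arm = {j'. j' > j \<and> (i, j') \<in> D}"
  define leg where "leg = {i'. i' > i \<and> (i', j) \<in> D}"
  have "arm \<subseteq> snd ` D" and "leg \<subseteq> fst ` D"
    unfolding arm_def leg_def by force+
  then have "finite arm" and "finite leg"
    using assms(1) by (auto dest: finite_subset)
  have "hook D (i, j) = insert (i, j) (Pair i ` arm \<union> (\<lambda>i'. (i', j)) ` leg)"
    using assms(2) by (auto simp: hook_def arm_def leg_def)
  moreover have "(i, j) \<notin> Pair i ` arm \<union> (\<lambda>i'. (i', j)) ` leg"
    and "Pair i ` arm \<inter> (\<lambda>i'. (i', j)) ` leg = {}"
    by (auto simp: arm_def leg_def)
  ultimately have "card (hook D (i, j)) = Suc (card (Pair i ` arm) + card ((\<lambda>i'. (i', j)) ` leg))"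
    using \<open>finite arm\<close> \<open>finite leg\<close> by (simp add: card_Un_disjoint)
  also have "\<dots> = Suc (card arm + card leg)"
    by (simp add: card_image inj_on_def)
  finally show ?thesis
    by (simp add: hook_length_def arm_def leg_def)
qed

lemma hook_diagonal: "hook D (d, d) = {c \<in> D. min (fst c) (snd c) = d}"
  by (auto simp: hook_def)

lemma diagonal_hook_sum_eq_card:
  assumes "young_diagram D"
  shows "diagonal_hook_sum D = card D"
proof -
  define diag where "diag = {c \<in> D. fst c = snd c}"
  have "finite D"
    and closed: "\<And>i j i' j'. (i, j) \<in> D \<Longrightarrow> i' \<le> i \<Longrightarrow> j' \<le> j \<Longrightarrow> (i', j') \<in> D"
    using assms by (auto simp: young_diagram_def)
  then have "finite diag"
    by (simp add: diag_def)
  have hook_diag: "hook D c = {c' \<in> D. min (fst c') (snd c') = fst c}" if "c \<in> diag" for c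
  proof -
    have "c = (fst c, fst c)"
      using that by (simp add: diag_def prod_eq_iff)
    then show ?thesis
      by (metis hook_diagonal fst_conv)
  qed
  have "D = (\<Union>c\<in>diag. hook D c)"
  proof (intro equalityI subsetI)
    fix c assume "c \<in> D"
    define d where "d = min (fst c) (snd c)"
    have "(d, d) \<in> D"
      using closed[of "fst c" "snd c"] \<open>c \<in> D\<close> by (simp add: d_def)
    then have "(d, d) \<in> diag" and "c \<in> hook D (d, d)"
      using \<open>c \<in> D\<close> by (simp_all add: diag_def hook_diagonal d_def)
    then show "c \<in> (\<Union>c\<in>diag. hook D c)"
      by blast
  qed (auto simp: hook_def)
  moreover have "card (\<Union>c\<in>diag. hook D c) = (\<Sum>c\<in>diag. card (hook D c))"
  proof (intro card_UN_disjoint ballI impI)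
    fix c c' assume "c \<in> diag" "c' \<in> diag" "c \<noteq> c'"
    then have "fst c \<noteq> fst c'"
      by (auto simp: diag_def prod_eq_iff)
    then show "hook D c \<inter> hook D c' = {}"
      using \<open>c \<in> diag\<close> \<open>c' \<in> diag\<close> by (auto simp: hook_diag)
  qed (use \<open>finite D\<close> \<open>finite diag\<close> in \<open>auto simp: hook_def\<close>)
  ultimately have "card D = (\<Sum>c\<in>diag. card (hook D c))"
    by metis
  also have "\<dots> = diagonal_hook_sum D"
    unfolding diagonal_hook_sum_def diag_def using \<open>finite D\<close> by (intro sum.cong) (auto simp: card_hook)
  finally show ?thesis ..
qed

lemma young_diagram_KN: "young_diagram (KN S)"
proof -
  define cs where "cs = sorted_list_of_set (UNIV - S)"
  define row where "row i = card {s \<in> S. s < cs ! (length cs - 1 - i)}" for i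
  have KN: "KN S = (SIGMA i:{..<length cs}. {..<row i})"
    by (auto simp: KN_def Let_def cs_def row_def)
  have "row i \<le> row i'" if "i' \<le> i" and "i < length cs" for i i'
  proof -
    have "cs ! (length cs - 1 - i) \<le> cs ! (length cs - 1 - i')"
      using that by (intro sorted_nth_mono) (auto simp: cs_def)
    then show ?thesis
      unfolding row_def by (intro card_mono) auto
  qed
  then show ?thesis
    unfolding young_diagram_def KN by fastforce
qed

lemma card_S_of_less_add_card_less:
  "card {s \<in> S_of A. s < x} + card {a \<in> A. a < x} = x"
proof -
  have "{s \<in> S_of A. s < x} \<union> {a \<in> A. a < x} = {..<x}"
    by (auto simp: S_of_def)
  moreover have "card ({s \<in> S_of A. s < x} \<union> {a \<in> A. a < x})
      = card {s \<in> S_of A. s < x} + card {a \<in> A. a < x}"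
    by (rule card_Un_disjoint) (auto simp: S_of_def)
  ultimately show ?thesis
    by simp
qed

lemma card_KN_S_of:
  assumes "finite A"
  shows "card (KN (S_of A)) + \<Sum>{..<card A} = \<Sum>A"
proof -
  define cs where "cs = sorted_list_of_set A"
  define row where "row i = card {s \<in> S_of A. s < cs ! i}" for i
  have "KN (S_of A) = (SIGMA i:{..<card A}. {..<row (card A - Suc i)})"
    using assms by (auto simp: KN_def Let_def S_of_def Diff_Diff_Int cs_def row_def)
  then have "card (KN (S_of A)) = (\<Sum>i<card A. row i)"
    by (simp add: sum.nat_diff_reindex)
  then have "card (KN (S_of A)) + \<Sum>{..<card A} = (\<Sum>i<card A. row i + i)"
    by (simp add: sum.distrib)
  also have "\<dots> = (\<Sum>i<card A. cs ! i)"
  proof (rule sum.cong)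
    fix i assume "i \<in> {..<card A}"
    then have "card {a \<in> A. a < cs ! i} = i"
      using card_less_sorted_list_of_set_nth[OF assms] by (simp add: cs_def)
    then show "row i + i = cs ! i"
      using card_S_of_less_add_card_less[of A "cs ! i"] by (simp add: row_def)
  qed simp
  also have "\<dots> = \<Sum>A"
    using sum_eq_sum_sorted_list_of_set_nth[OF assms] by (simp add: cs_def)
  finally show ?thesis .
qed

lemma card_missing_add_card:
  assumes "finite lam" and "0 \<notin> lam"
  shows "card (missing lam) + card lam = Max lam"
proof -
  have "lam \<subseteq> {1..Max lam}"
    using assms by (auto simp: Suc_le_eq intro: gr0I)
  moreover from this have "card lam \<le> Max lam"
    using card_mono[of "{1..Max lam}" lam] by simp
  ultimately show ?thesis
    unfolding missing_def by (simp add: card_Diff_subset finite_subset)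
qed

lemma double_Max_add_le_double_sum:
  fixes A :: "nat set"
  assumes "finite A" and "0 \<notin> A" and "A \<noteq> {}"
  shows "2 * Max A + card A * (card A - 1) \<le> 2 * \<Sum>A"
proof -
  have "Max A \<in> A"
    using assms by simp
  then have "\<Sum>A = Max A + \<Sum>(A - {Max A})" and "card (A - {Max A}) = card A - 1"
    using assms(1) by (simp_all add: sum.remove)
  moreover have "Suc (card A - 1) = card A"
    using assms(1,3) by (simp add: card_gt_0_iff)
  ultimately show ?thesis
    using card_times_Suc_card_le_double_sum[of "A - {Max A}"] assms(1,2)
    by (simp add: mult.commute)
qed

lemma double_tri: "2 * tri n = n * Suc n"
  by (simp add: tri_def)

lemma double_sum_atLeastAtMost_1: "2 * \<Sum>{1..m} = m * Suc (m :: nat)"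
  by (induction m) (simp_all add: atLeastAtMostSuc_conv)

lemma double_tri_d:
  assumes "d \<le> n"
  shows "2 * tri_d n d + 2 * d = n * Suc n"
proof -
  have "d \<le> tri n"
    using assms double_tri[of n] by (cases n) auto
  then show ?thesis
    using double_tri[of n] by (simp add: tri_d_def)
qed

lemma double_sum_lessThan_Suc: "2 * \<Sum>{..<Suc m} = m * Suc m"
  by (induction m) auto

(* The witnesses for n = 2k + 4 and for n = p + 2k + 5; both have largest part 2n - 5. *)

lemma unrefinable_witness_tight:
  "insert (4 * k + 3) {1..2 * k + 2} \<in> unrefinable_parts (tri_d (2 * k + 4) 4)"
  (is "?mu \<in> _")
proof -
  have "finite ?mu" and "Max ?mu = 4 * k + 3"
    by (auto intro!: Max_eqI)
  moreover have "2 * \<Sum>?mu = 2 * tri_d (2 * k + 4) 4"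
    using double_sum_atLeastAtMost_1[of "2 * k + 2"] double_tri[of "2 * k + 4"]
    by (simp add: tri_d_def algebra_simps)
  moreover have "{1, 4 * k + 3} \<subseteq> ?mu"
    by auto
  then have "card {1, 4 * k + 3} \<le> card ?mu"
    by (rule card_mono[OF \<open>finite ?mu\<close>])
  then have "2 \<le> card ?mu"
    by simp
  moreover have "\<not> refinable ?mu"
    by (auto simp: refinable_def missing_def \<open>Max ?mu = 4 * k + 3\<close>)
  ultimately show ?thesis
    by (simp add: unrefinable_parts_def distinct_partition_def)
qed

lemma unrefinable_witness:
  assumes "1 \<le> k"
  shows "insert (2 * p + 4 * k + 5) (insert (p + 3 * k + 3) (insert (p + 2 * k + 3)
           ({1..p + 2 * k + 1} - {p + k + 2}))) \<in> unrefinable_parts (tri_d (p + 2 * k + 5) (p + 5))"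
  (is "?mu \<in> _")
proof -
  have mem: "x \<in> ?mu \<longleftrightarrow> x = 2 * p + 4 * k + 5 \<or> x = p + 3 * k + 3 \<or> x = p + 2 * k + 3
      \<or> 1 \<le> x \<and> x \<le> p + 2 * k + 1 \<and> x \<noteq> p + k + 2" for x
    by auto
  have "finite ?mu" and "Max ?mu = 2 * p + 4 * k + 5"
    by (auto simp: mem intro!: Max_eqI)
  have "\<Sum>?mu = (2 * p + 4 * k + 5) + (p + 3 * k + 3) + (p + 2 * k + 3) + (\<Sum>{1..p + 2 * k + 1} - (p + k + 2))"
    using assms by (simp add: sum_diff1_nat)
  moreover have "p + k + 2 \<le> \<Sum>{1..p + 2 * k + 1}"
    using assms member_le_sum[of "p + k + 2" "{1..p + 2 * k + 1}" "\<lambda>x. x"] by simp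
  ultimately have "2 * \<Sum>?mu = 2 * tri_d (p + 2 * k + 5) (p + 5)"
    using double_sum_atLeastAtMost_1[of "p + 2 * k + 1"] double_tri[of "p + 2 * k + 5"]
    by (simp add: tri_d_def algebra_simps)
  moreover have "{1, 2 * p + 4 * k + 5} \<subseteq> ?mu"
    using assms by auto
  then have "card {1, 2 * p + 4 * k + 5} \<le> card ?mu"
    by (rule card_mono[OF \<open>finite ?mu\<close>])
  then have "2 \<le> card ?mu"
    by simp
  moreover have "\<not> refinable ?mu"
  proof
    assume "refinable ?mu"
    then obtain a b where a: "a \<in> missing ?mu" and b: "b \<in> missing ?mu"
      and "a \<noteq> b" and "a + b \<in> ?mu"
      unfolding refinable_def by blast
    have missing_cases: "x = p + k + 2 \<or> x = p + 2 * k + 2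
        \<or> p + 2 * k + 4 \<le> x \<and> x \<le> 2 * p + 4 * k + 4 \<and> x \<noteq> p + 3 * k + 3"
      if "x \<in> missing ?mu" for x
      using that unfolding missing_def \<open>Max ?mu = 2 * p + 4 * k + 5\<close> mem by auto
    show False
      using missing_cases[OF a] missing_cases[OF b] \<open>a + b \<in> ?mu\<close> \<open>a \<noteq> b\<close> assms
      unfolding mem by (elim disjE conjE; linarith)
  qed
  ultimately show ?thesis
    using \<open>finite ?mu\<close> by (simp add: unrefinable_parts_def distinct_partition_def)
qed

lemma ex_unrefinable_with_part:
  assumes "1 \<le> k" and "2 * k + 4 \<le> n"
  shows "\<exists>mu\<in>unrefinable_parts (tri_d n (n - 2 * k)). 2 * n - 5 \<in> mu"
proof (cases "n = 2 * k + 4")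
  case True
  then show ?thesis
    using unrefinable_witness_tight[of k] by (intro bexI[of _ "insert (4 * k + 3) {1..2 * k + 2}"]) auto
next
  case False
  define p where "p = n - (2 * k + 5)"
  have "n = p + 2 * k + 5"
    using False assms(2) by (simp add: p_def)
  then show ?thesis
    using unrefinable_witness[OF assms(1), of p] by (intro bexI) auto
qed

lemma card_bar_unrefinable:
  assumes "1 \<le> k" and "2 * k + 4 \<le> n" and "lam \<in> bar_unrefinable (tri_d n (n - 2 * k))"
  shows "card lam = n - 2"
proof -
  let ?N = "tri_d n (n - 2 * k)"
  have lam: "lam \<in> unrefinable_parts ?N" and half: "card (missing lam) = Max lam div 2"
    and maximal: "\<And>mu. mu \<in> unrefinable_parts ?N \<Longrightarrow> Max mu \<le> Max lam"
    using assms(3) by (auto simp: bar_unrefinable_def maximal_unrefinable_def)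
  from lam have "finite lam" and "0 \<notin> lam" and "lam \<noteq> {}" and sum_lam: "\<Sum>lam = ?N"
    by (auto simp: unrefinable_parts_def distinct_partition_def)
  have card_lam: "card lam = Max lam - Max lam div 2"
    using card_missing_add_card[OF \<open>finite lam\<close> \<open>0 \<notin> lam\<close>] half by simp
  obtain mu where "mu \<in> unrefinable_parts ?N" and "2 * n - 5 \<in> mu"
    using ex_unrefinable_with_part[OF assms(1,2)] by blast
  then have "2 * n - 5 \<le> Max mu"
    by (auto simp: unrefinable_parts_def distinct_partition_def intro: Max_ge)
  then have "2 * n - 5 \<le> Max lam"
    using maximal[OF \<open>mu \<in> unrefinable_parts ?N\<close>] by linarith
  then have "n - 2 \<le> card lam"
    unfolding card_lam by linarith
  moreover have "card lam \<le> n - 2"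
  proof (rule ccontr)
    assume "\<not> card lam \<le> n - 2"
    then have "2 * n - 3 \<le> Max lam"
      using card_lam by linarith
    moreover have "(n - 1) * (n - 2) \<le> card lam * (card lam - 1)"
      using \<open>\<not> card lam \<le> n - 2\<close> by (intro mult_le_mono) auto
    ultimately have "2 * (2 * n - 3) + (n - 1) * (n - 2) \<le> 2 * ?N"
      using double_Max_add_le_double_sum[OF \<open>finite lam\<close> \<open>0 \<notin> lam\<close> \<open>lam \<noteq> {}\<close>] sum_lam
      by linarith
    moreover have "(n - 1) * (n - 2) + 4 * n = n * Suc n + 2"
    proof -
      define r where "r = n - 4"
      have "n = r + 4"
        using assms(2) by (simp add: r_def)
      then show ?thesis
        by (simp add: algebra_simps)
    qed
    ultimately show False
      using double_tri_d[of "n - 2 * k" n] assms(2) by linarith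
  qed
  ultimately show ?thesis
    by simp
qed

lemma card_KN_bar_unrefinable:
  assumes "1 \<le> k" and "2 * k + 4 \<le> n" and "lam \<in> bar_unrefinable (tri_d n (n - 2 * k))"
  shows "card (KN (S_of lam)) = 2 * n - 3 + 2 * k"
proof -
  have "finite lam" and sum_lam: "\<Sum>lam = tri_d n (n - 2 * k)"
    using assms(3)
    by (auto simp: bar_unrefinable_def maximal_unrefinable_def unrefinable_parts_def distinct_partition_def)
  define q where "q = n - 3"
  have "n = q + 3"
    using assms(2) by (simp add: q_def)
  have "card lam = Suc q"
    using card_bar_unrefinable[OF assms] \<open>n = q + 3\<close> by simp
  then have "card (KN (S_of lam)) + \<Sum>{..<Suc q} = tri_d n (n - 2 * k)"
    using card_KN_S_of[OF \<open>finite lam\<close>] sum_lam by simp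
  moreover have "n * Suc n = q * Suc q + 6 * q + 12"
    using \<open>n = q + 3\<close> by (simp add: algebra_simps)
  ultimately show ?thesis
    using double_sum_lessThan_Suc[of q] double_tri_d[of "n - 2 * k" n] \<open>n = q + 3\<close> assms(2)
    by linarith
qed

theorem proposition4p5:
  fixes n k :: nat and lam :: "nat set"
  assumes "2 \<le> 2 * k" and "2 * k + 4 \<le> n"
    and "lam \<in> bar_unrefinable (tri_d n (n - 2 * k))"
  shows "card (KN (S_of lam)) = 2 * n - 3 + 2 * k
       \<and> diagonal_hook_sum (KN (S_of lam)) = 2 * n - 3 + 2 * k"
proof -
  have "1 \<le> k"
    using assms(1) by simp
  then have "card (KN (S_of lam)) = 2 * n - 3 + 2 * k"
    using card_KN_bar_unrefinable assms(2,3) by blast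
  moreover have "diagonal_hook_sum (KN (S_of lam)) = card (KN (S_of lam))"
    by (rule diagonal_hook_sum_eq_card[OF young_diagram_KN])
  ultimately show ?thesis
    by simp
qed

end
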